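(* Let $M$ be a finite set of alternatives, $\mathcal{R}$ the set of weak preference orders on $M$, and $\varphi:\mathcal{R}\to\Delta(M)$ a mechanism. If $\varphi$ is separation monotonic, separation upper invariant, and separation lower invariant, then it is multi-separation strategyproof, i.e., for every multi-separation $(R,R')$, $\varphi(R)$ first order-stochastically dominates $\varphi(R')$ at $R$, and $\varphi(R')$ first order-stochastically dominates $\varphi(R)$ at $R'$.
   Context: A preference order is a complete, transitive relation $R$ on $M$; $a\,I\,b$ means $a\,R\,b$ and $b\,R\,a$; $a\,P\,b$ means $a\,R\,b$ and not $b\,R\,a$. Write $R$ as $M_1\,P\,\cdots\,P\,M_K$ where $(M_k)$ are the nonempty indifference classes ordered so that $a\,P\,b$ for $a\in M_k$, $b\in M_{k'}$, $k<k'$. For $A\subseteq M$, $\varphi_A(R)=\sum_{a\in A}(\varphi(R))_a$. A lottery $x$ first order-stochastically dominates $y$ at $R$ if $\sum_{j: j R a}x_j\ge\sum_{j: j R a}y_j$ for all $a\in M$. A multi-separation is a pair $(R,R')$ such that, with $R=M_1\,P\,\cdots\,P\,M_K$, there are integers $L_1,\dots,L_K\ge1$ and, for each $k$, a partition of $M_k$ into pairwise disjoint nonempty sets $M_k^1,\dots,M_k^{L_k}$ with $R'=M_1^1\,P'\,\cdots\,P'\,M_1^{L_1}\,P'\,M_2^1\,P'\,\cdots\,P'\,M_K^1\,P'\,\cdots\,P'\,M_K^{L_K}$ (indifference within each listed set). A separation is a pair $(R,R')$ such that there are $\kappa\in\{1,\dots,K\}$ and a partition of $M_\kappa$ into disjoint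 nonempty $M_\kappa^1,M_\kappa^2$ with $R'=M_1\,P'\,\cdots\,P'\,M_{\kappa-1}\,P'\,M_\kappa^1\,P'\,M_\kappa^2\,P'\,M_{\kappa+1}\,P'\,\cdots\,P'\,M_K$. Axioms, for every separation $(R,R')$: separation responsive: $\varphi_{M_\kappa^1}(R')\ge\varphi_{M_\kappa^1}(R)$ and $\varphi_{M_\kappa^2}(R')\le\varphi_{M_\kappa^2}(R)$; separation direct: if $\varphi_{M_k}(R)\ne\varphi_{M_k}(R')$ for some $k\in\{1,\dots,K\}$ then $\varphi_{M_\kappa^1}(R')\ne\varphi_{M_\kappa^1}(R)$ and $\varphi_{M_\kappa^2}(R')\ne\varphi_{M_\kappa^2}(R)$; separation monotonic: responsive and direct; separation upper invariant: $\varphi_{M_k}(R)=\varphi_{M_k}(R')$ for $k<\kappa$; separation lower invariant: $\varphi_{M_k}(R)=\varphi_{M_k}(R')$ for $k>\kappa$. *)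

theory Defs
  imports Complex_Main
begin

definition weak_order :: "'a set \<Rightarrow> 'a rel \<Rightarrow> bool" where
  "weak_order M R \<longleftrightarrow> R \<subseteq> M \<times> M \<and>
     (\<forall>a\<in>M. \<forall>b\<in>M. (a, b) \<in> R \<or> (b, a) \<in> R) \<and> trans R"

definition ordered_partition :: "'a set \<Rightarrow> 'a set list \<Rightarrow> bool" where
  "ordered_partition M Ms \<longleftrightarrow>
     (\<forall>k<length Ms. Ms ! k \<noteq> {}) \<and>
     (\<forall>i<length Ms. \<forall>j<length Ms. i \<noteq> j \<longrightarrow> Ms ! i \<inter> Ms ! j = {}) \<and>
     \<Union>(set Ms) = M"

definition ord_rel :: "'a set list \<Rightarrow> 'a rel" where
  "ord_rel Ms = {(a, b). \<exists>i<length Ms. \<exists>j<length Ms. i \<le> j \<and> a \<in> Ms ! i \<and> b \<in> Ms ! j}"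

definition phi_set :: "('a rel \<Rightarrow> 'a \<Rightarrow> real) \<Rightarrow> 'a rel \<Rightarrow> 'a set \<Rightarrow> real" where
  "phi_set \<phi> R A = (\<Sum>a\<in>A. \<phi> R a)"

definition lottery :: "'a set \<Rightarrow> ('a \<Rightarrow> real) \<Rightarrow> bool" where
  "lottery M x \<longleftrightarrow> (\<forall>a\<in>M. x a \<ge> 0) \<and> (\<Sum>a\<in>M. x a) = 1"

definition fosd :: "'a set \<Rightarrow> 'a rel \<Rightarrow> ('a \<Rightarrow> real) \<Rightarrow> ('a \<Rightarrow> real) \<Rightarrow> bool" where
  "fosd M R x y \<longleftrightarrow>
     (\<forall>a\<in>M. (\<Sum>j\<in>{j\<in>M. (j, a) \<in> R}. x j) \<ge> (\<Sum>j\<in>{j\<in>M. (j, a) \<in> R}. y j))"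

definition multi_separation :: "'a set \<Rightarrow> 'a rel \<Rightarrow> 'a rel \<Rightarrow> bool" where
  "multi_separation M R R' \<longleftrightarrow>
     (\<exists>Ms Ls. ordered_partition M Ms \<and> R = ord_rel Ms \<and>
        length Ls = length Ms \<and>
        (\<forall>k<length Ms. ordered_partition (Ms ! k) (Ls ! k)) \<and>
        R' = ord_rel (concat Ls))"

text \<open>Separations: R = ord_rel Ms, class Ms!\<kappa> split into A (upper) and B (lower).\<close>
definition separation_data :: "'a set \<Rightarrow> 'a set list \<Rightarrow> nat \<Rightarrow> 'a set \<Rightarrow> 'a set \<Rightarrow> bool" where
  "separation_data M Ms \<kappa> A B \<longleftrightarrow> ordered_partition M Ms \<and> \<kappa> < length Ms \<and>
     A \<noteq> {} \<and> B \<noteq> {} \<and> A \<inter> B = {} \<and> A \<union> B = Ms ! \<kappa>"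

definition split_at :: "'a set list \<Rightarrow> nat \<Rightarrow> 'a set \<Rightarrow> 'a set \<Rightarrow> 'a set list" where
  "split_at Ms \<kappa> A B = take \<kappa> Ms @ [A, B] @ drop (Suc \<kappa>) Ms"

definition separation_responsive :: "'a set \<Rightarrow> ('a rel \<Rightarrow> 'a \<Rightarrow> real) \<Rightarrow> bool" where
  "separation_responsive M \<phi> \<longleftrightarrow>
     (\<forall>Ms \<kappa> A B. separation_data M Ms \<kappa> A B \<longrightarrow>
        (let R = ord_rel Ms; R' = ord_rel (split_at Ms \<kappa> A B) in
          phi_set \<phi> R' A \<ge> phi_set \<phi> R A \<and> phi_set \<phi> R' B \<le> phi_set \<phi> R B))"

definition separation_direct :: "'a set \<Rightarrow> ('a rel \<Rightarrow> 'a \<Rightarrow> real) \<Rightarrow> bool" where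
  "separation_direct M \<phi> \<longleftrightarrow>
     (\<forall>Ms \<kappa> A B. separation_data M Ms \<kappa> A B \<longrightarrow>
        (let R = ord_rel Ms; R' = ord_rel (split_at Ms \<kappa> A B) in
          (\<exists>k<length Ms. phi_set \<phi> R (Ms ! k) \<noteq> phi_set \<phi> R' (Ms ! k)) \<longrightarrow>
          phi_set \<phi> R' A \<noteq> phi_set \<phi> R A \<and> phi_set \<phi> R' B \<noteq> phi_set \<phi> R B))"

definition separation_monotonic :: "'a set \<Rightarrow> ('a rel \<Rightarrow> 'a \<Rightarrow> real) \<Rightarrow> bool" where
  "separation_monotonic M \<phi> \<longleftrightarrow> separation_responsive M \<phi> \<and> separation_direct M \<phi>"

definition separation_upper_invariant :: "'a set \<Rightarrow> ('a rel \<Rightarrow> 'a \<Rightarrow> real) \<Rightarrow> bool" where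
  "separation_upper_invariant M \<phi> \<longleftrightarrow>
     (\<forall>Ms \<kappa> A B. separation_data M Ms \<kappa> A B \<longrightarrow>
        (\<forall>k<\<kappa>. phi_set \<phi> (ord_rel Ms) (Ms ! k) =
                 phi_set \<phi> (ord_rel (split_at Ms \<kappa> A B)) (Ms ! k)))"

definition separation_lower_invariant :: "'a set \<Rightarrow> ('a rel \<Rightarrow> 'a \<Rightarrow> real) \<Rightarrow> bool" where
  "separation_lower_invariant M \<phi> \<longleftrightarrow>
     (\<forall>Ms \<kappa> A B. separation_data M Ms \<kappa> A B \<longrightarrow>
        (\<forall>k. \<kappa> < k \<and> k < length Ms \<longrightarrow>
           phi_set \<phi> (ord_rel Ms) (Ms ! k) =
           phi_set \<phi> (ord_rel (split_at Ms \<kappa> A B)) (Ms ! k)))"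

definition multi_separation_strategyproof :: "'a set \<Rightarrow> ('a rel \<Rightarrow> 'a \<Rightarrow> real) \<Rightarrow> bool" where
  "multi_separation_strategyproof M \<phi> \<longleftrightarrow>
     (\<forall>R R'. multi_separation M R R' \<longrightarrow>
        fosd M R (\<phi> R) (\<phi> R') \<and> fosd M R' (\<phi> R') (\<phi> R))"

end

(*
  R' is reached from R by a chain of separations, each splitting off the
  first block of a class that is still refined non-trivially.  Under one separation, upper and
  lower invariance fix the probability of every class except the split one, and since both
  lotteries have total mass 1 that class keeps its probability too.  By additivity this
  propagates along the chain: phi R and phi R' give the same probability to every class of R.

  Every upper contour set of R is a union of classes of R, so the two lotteries agree on it.
  An upper contour set of R' is a union of classes of R plus an initial segment U of the blocks
  of one class; separating U from the rest of its class shows, by responsiveness, that phi R'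
  gives U at least as much probability as phi R.
*)
theory Submission
  imports Defs
begin

lemma ordered_partition_iff:
  "ordered_partition M Ms \<longleftrightarrow>
     {} \<notin> set Ms \<and> distinct Ms \<and> (\<forall>X\<in>set Ms. \<forall>Y\<in>set Ms. X \<noteq> Y \<longrightarrow> X \<inter> Y = {}) \<and>
     \<Union>(set Ms) = M"
proof -
  have nonempty: "(\<forall>k<length Ms. Ms ! k \<noteq> {}) \<longleftrightarrow> {} \<notin> set Ms"
    by (auto simp: in_set_conv_nth)
  have disjoint: "(\<forall>i<length Ms. \<forall>j<length Ms. i \<noteq> j \<longrightarrow> Ms ! i \<inter> Ms ! j = {}) \<longleftrightarrow>
      distinct Ms \<and> (\<forall>X\<in>set Ms. \<forall>Y\<in>set Ms. X \<noteq> Y \<longrightarrow> X \<inter> Y = {})"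
    if "{} \<notin> set Ms"
  proof
    assume disj: "\<forall>i<length Ms. \<forall>j<length Ms. i \<noteq> j \<longrightarrow> Ms ! i \<inter> Ms ! j = {}"
    then have "distinct Ms"
      using that unfolding distinct_conv_nth by (metis Int_absorb nth_mem)
    moreover have "X \<inter> Y = {}" if "X \<in> set Ms" "Y \<in> set Ms" "X \<noteq> Y" for X Y
      using that disj by (metis in_set_conv_nth)
    ultimately show "distinct Ms \<and> (\<forall>X\<in>set Ms. \<forall>Y\<in>set Ms. X \<noteq> Y \<longrightarrow> X \<inter> Y = {})"
      by blast
  next
    assume "distinct Ms \<and> (\<forall>X\<in>set Ms. \<forall>Y\<in>set Ms. X \<noteq> Y \<longrightarrow> X \<inter> Y = {})"
    then show "\<forall>i<length Ms. \<forall>j<length Ms. i \<noteq> j \<longrightarrow> Ms ! i \<inter> Ms ! j = {}"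
      by (simp add: nth_eq_iff_index_eq)
  qed
  show ?thesis
    unfolding ordered_partition_def nonempty using disjoint by (cases "{} \<in> set Ms") simp_all
qed

lemma ordered_partition_append_iff:
  "ordered_partition M (xs @ ys) \<longleftrightarrow>
     ordered_partition (\<Union>(set xs)) xs \<and> ordered_partition (\<Union>(set ys)) ys \<and>
     \<Union>(set xs) \<inter> \<Union>(set ys) = {} \<and> M = \<Union>(set xs) \<union> \<Union>(set ys)"
proof
  assume "ordered_partition M (xs @ ys)"
  then have ne: "{} \<notin> set xs" "{} \<notin> set ys"
    and dist: "distinct xs" "distinct ys" "set xs \<inter> set ys = {}"
    and disj: "\<forall>X\<in>set xs \<union> set ys. \<forall>Y\<in>set xs \<union> set ys. X \<noteq> Y \<longrightarrow> X \<inter> Y = {}"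
    and un: "M = \<Union>(set xs) \<union> \<Union>(set ys)"
    unfolding ordered_partition_iff by simp_all
  have "X \<inter> Y = {}" if "X \<in> set xs" "Y \<in> set ys" for X Y
  proof -
    have "X \<noteq> Y" using that dist(3) by blast
    then show ?thesis using disj that by blast
  qed
  then have "\<Union>(set xs) \<inter> \<Union>(set ys) = {}"
    by blast
  with ne dist disj un show "ordered_partition (\<Union>(set xs)) xs \<and> ordered_partition (\<Union>(set ys)) ys \<and>
     \<Union>(set xs) \<inter> \<Union>(set ys) = {} \<and> M = \<Union>(set xs) \<union> \<Union>(set ys)"
    unfolding ordered_partition_iff by simp
next
  assume "ordered_partition (\<Union>(set xs)) xs \<and> ordered_partition (\<Union>(set ys)) ys \<and>
     \<Union>(set xs) \<inter> \<Union>(set ys) = {} \<and> M = \<Union>(set xs) \<union> \<Union>(set ys)"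
  then have ne: "{} \<notin> set xs" "{} \<notin> set ys" and dist: "distinct xs" "distinct ys"
    and disj: "\<forall>X\<in>set xs. \<forall>Y\<in>set xs. X \<noteq> Y \<longrightarrow> X \<inter> Y = {}"
      "\<forall>X\<in>set ys. \<forall>Y\<in>set ys. X \<noteq> Y \<longrightarrow> X \<inter> Y = {}"
    and cross: "\<Union>(set xs) \<inter> \<Union>(set ys) = {}" and un: "M = \<Union>(set xs) \<union> \<Union>(set ys)"
    unfolding ordered_partition_iff by simp_all
  have "set xs \<inter> set ys = {}"
  proof (rule ccontr)
    assume "set xs \<inter> set ys \<noteq> {}"
    then obtain X where "X \<in> set xs" "X \<in> set ys" by blast
    then have "X \<subseteq> \<Union>(set xs) \<inter> \<Union>(set ys)" by blast
    with cross ne \<open>X \<in> set xs\<close> show False by auto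
  qed
  moreover have "X \<inter> Y = {}" if "X \<in> set xs" "Y \<in> set ys" for X Y
    using that cross by blast
  ultimately show "ordered_partition M (xs @ ys)"
    unfolding ordered_partition_iff using ne dist disj un by (simp add: ball_Un) (metis Int_commute)
qed

lemma ordered_partition_singleton_iff: "ordered_partition X [Y] \<longleftrightarrow> Y = X \<and> X \<noteq> {}"
  unfolding ordered_partition_def by auto

lemma ordered_partition_subset: "ordered_partition M Ms \<Longrightarrow> X \<in> set Ms \<Longrightarrow> X \<subseteq> M"
  unfolding ordered_partition_def by blast

lemma ordered_partition_take:
  "ordered_partition M Ms \<Longrightarrow> ordered_partition (\<Union>(set (take q Ms))) (take q Ms)"
  using ordered_partition_append_iff[of M "take q Ms" "drop q Ms"] by simp

lemma ordered_partition_take_disjoint_nth: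
  assumes "ordered_partition M Ms" and "k < length Ms"
  shows "\<Union>(set (take k Ms)) \<inter> Ms ! k = {}"
proof -
  have "Ms ! k \<in> set (drop k Ms)"
    using assms(2) by (metis Cons_nth_drop_Suc list.set_intros(1))
  then show ?thesis
    using assms(1) ordered_partition_append_iff[of M "take k Ms" "drop k Ms"] by auto
qed

lemma ordered_partition_nth_unique:
  "ordered_partition M Ms \<Longrightarrow> i < length Ms \<Longrightarrow> j < length Ms \<Longrightarrow> a \<in> Ms ! i \<Longrightarrow> a \<in> Ms ! j \<Longrightarrow> i = j"
  unfolding ordered_partition_def by blast

lemma ordered_partition_obtain_nth:
  assumes "ordered_partition M Ms" and "a \<in> M"
  obtains i where "i < length Ms" and "a \<in> Ms ! i"
  using assms unfolding ordered_partition_def by (auto simp: in_set_conv_nth)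

lemma Union_set_concat_refinement:
  "list_all2 ordered_partition Ms Ls \<Longrightarrow> \<Union>(set (concat Ls)) = \<Union>(set Ms)"
  by (induction rule: list_all2_induct) (auto simp: ordered_partition_def)

lemma ordered_partition_concat:
  assumes "list_all2 ordered_partition Ms Ls" and "ordered_partition M Ms"
  shows "ordered_partition M (concat Ls)"
  using assms
proof (induction arbitrary: M rule: list_all2_induct)
  case (Cons X Ms L Ls)
  then show ?case
    using ordered_partition_append_iff[of M "[X]" Ms] ordered_partition_append_iff[of M L "concat Ls"]
      Union_set_concat_refinement[OF Cons.hyps(2)]
    by (auto simp: ordered_partition_singleton_iff ordered_partition_def[of X L])
qed simp

lemma sum_ordered_partition:
  assumes "finite M" and "ordered_partition M Ms"
  shows "sum f M = (\<Sum>X\<in>set Ms. sum f X)"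
proof -
  have "finite X" if "X \<in> set Ms" for X
    using ordered_partition_subset[OF assms(2) that] assms(1) by (rule finite_subset)
  moreover have "\<forall>X\<in>set Ms. \<forall>Y\<in>set Ms. X \<noteq> Y \<longrightarrow> X \<inter> Y = {}" and "\<Union>(set Ms) = M"
    using assms(2) unfolding ordered_partition_iff by simp_all
  ultimately show ?thesis
    using sum.Union_disjoint[of "set Ms" f] by simp
qed

lemma weak_order_ord_rel:
  assumes "ordered_partition M Ms"
  shows "weak_order M (ord_rel Ms)"
  unfolding weak_order_def
proof (intro conjI)
  show "ord_rel Ms \<subseteq> M \<times> M"
    using ordered_partition_subset[OF assms] nth_mem unfolding ord_rel_def by blast
  show "\<forall>a\<in>M. \<forall>b\<in>M. (a, b) \<in> ord_rel Ms \<or> (b, a) \<in> ord_rel Ms"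
  proof (intro ballI)
    fix a b assume "a \<in> M" "b \<in> M"
    then obtain i j where "i < length Ms" "a \<in> Ms ! i" "j < length Ms" "b \<in> Ms ! j"
      using assms by (metis ordered_partition_obtain_nth)
    then show "(a, b) \<in> ord_rel Ms \<or> (b, a) \<in> ord_rel Ms"
      unfolding ord_rel_def by (cases "i \<le> j") auto
  qed
  show "trans (ord_rel Ms)"
  proof (rule transI)
    fix a b c assume "(a, b) \<in> ord_rel Ms" "(b, c) \<in> ord_rel Ms"
    then obtain i j j' l where "i \<le> j" "j' \<le> l" "l < length Ms" "j < length Ms" "j' < length Ms"
      "a \<in> Ms ! i" "b \<in> Ms ! j" "b \<in> Ms ! j'" "c \<in> Ms ! l"
      unfolding ord_rel_def by auto
    moreover from this have "j = j'"
      using ordered_partition_nth_unique[OF assms] by blast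
    ultimately have "i \<le> l" "i < length Ms" "l < length Ms" "a \<in> Ms ! i" "c \<in> Ms ! l"
      by simp_all
    then show "(a, c) \<in> ord_rel Ms"
      unfolding ord_rel_def by blast
  qed
qed

lemma upper_contour_set_ord_rel:
  assumes "ordered_partition M Ms" and "p < length Ms" and "a \<in> Ms ! p"
  shows "{j \<in> M. (j, a) \<in> ord_rel Ms} = \<Union>(set (take (Suc p) Ms))"
proof -
  have "(j, a) \<in> ord_rel Ms \<longleftrightarrow> (\<exists>i\<le>p. j \<in> Ms ! i)" for j
    using assms ordered_partition_nth_unique[OF assms(1)] unfolding ord_rel_def
    by (auto intro: le_less_trans)
  moreover have "\<Union>(set (take (Suc p) Ms)) = (\<Union>i\<le>p. Ms ! i)"
    using assms(2) by (fastforce simp: in_set_conv_nth less_Suc_eq_le)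
  moreover have "Ms ! i \<subseteq> M" if "i \<le> p" for i
    using ordered_partition_subset[OF assms(1)] assms(2) that by simp
  ultimately show ?thesis
    by auto
qed

lemma sum_phi_set_classes:
  assumes "finite M" and "lottery M (\<phi> R)" and "ordered_partition M Ms"
  shows "(\<Sum>X\<in>set Ms. phi_set \<phi> R X) = 1"
  using assms sum_ordered_partition[OF assms(1,3), of "\<phi> R"] unfolding lottery_def phi_set_def by simp

lemma split_at_eq_concat:
  "\<kappa> < length Ms \<Longrightarrow> split_at Ms \<kappa> A B = concat ((map (\<lambda>X. [X]) Ms)[\<kappa> := [A, B]])"
  by (simp add: split_at_def upd_conv_take_nth_drop take_map drop_map concat_map_singleton)

lemma ordered_partition_split_at:
  assumes "separation_data M Ms \<kappa> A B"
  shows "ordered_partition M (split_at Ms \<kappa> A B)"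
proof -
  have op: "ordered_partition M Ms" and \<kappa>: "\<kappa> < length Ms"
    using assms unfolding separation_data_def by simp_all
  have "list_all2 ordered_partition Ms (map (\<lambda>X. [X]) Ms)"
    using op unfolding list_all2_conv_all_nth ordered_partition_singleton_iff ordered_partition_def
    by simp
  moreover have "ordered_partition (Ms ! \<kappa>) [A, B]"
    using assms ordered_partition_append_iff[of "Ms ! \<kappa>" "[A]" "[B]"]
    unfolding separation_data_def by (simp add: ordered_partition_singleton_iff)
  ultimately have "list_all2 ordered_partition Ms ((map (\<lambda>X. [X]) Ms)[\<kappa> := [A, B]])"
    using list_all2_update_cong[of ordered_partition Ms "map (\<lambda>X. [X]) Ms" "Ms ! \<kappa>" "[A, B]" \<kappa>]
    by simp
  then show ?thesis
    using ordered_partition_concat op split_at_eq_concat[OF \<kappa>] by metis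
qed

lemma in_set_split_at:
  assumes "\<kappa> < length Ms" and "X \<in> set Ms" and "X \<noteq> Ms ! \<kappa>"
  shows "X \<in> set (split_at Ms \<kappa> A B)"
proof -
  have "X \<in> set (take \<kappa> Ms @ Ms ! \<kappa> # drop (Suc \<kappa>) Ms)"
    using id_take_nth_drop[OF assms(1)] assms(2) by simp
  then show ?thesis
    using assms(3) unfolding split_at_def by auto
qed

lemma concat_take_nth_drop:
  "k < length Ls \<Longrightarrow> concat Ls = concat (take k Ls) @ Ls ! k @ concat (drop (Suc k) Ls)"
  by (metis concat.simps(2) concat_append id_take_nth_drop)

lemma refinement_split_block:
  assumes "list_all2 ordered_partition Ms Ls" and "ordered_partition M Ms" and "k < length Ms"
    and "Ls ! k = xs @ ys" and "xs \<noteq> []" and "ys \<noteq> []"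
  shows "separation_data M Ms k (\<Union>(set xs)) (\<Union>(set ys))"
    and "list_all2 ordered_partition (split_at Ms k (\<Union>(set xs)) (\<Union>(set ys)))
           (take k Ls @ [xs, ys] @ drop (Suc k) Ls)"
    and "concat (take k Ls @ [xs, ys] @ drop (Suc k) Ls) = concat Ls"
proof -
  have "ordered_partition (Ms ! k) (xs @ ys)"
    using assms(1,3,4) list_all2_nthD by fastforce
  then have xs: "ordered_partition (\<Union>(set xs)) xs" and ys: "ordered_partition (\<Union>(set ys)) ys"
    and "\<Union>(set xs) \<inter> \<Union>(set ys) = {}" "\<Union>(set xs) \<union> \<Union>(set ys) = Ms ! k"
    unfolding ordered_partition_append_iff by simp_all
  moreover have "\<Union>(set xs) \<noteq> {}" "\<Union>(set ys) \<noteq> {}"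
    using xs ys assms(5,6) unfolding ordered_partition_iff by (metis Union_empty_conv hd_in_set)+
  ultimately show "separation_data M Ms k (\<Union>(set xs)) (\<Union>(set ys))"
    using assms(2,3) unfolding separation_data_def by simp
  show "list_all2 ordered_partition (split_at Ms k (\<Union>(set xs)) (\<Union>(set ys)))
           (take k Ls @ [xs, ys] @ drop (Suc k) Ls)"
    unfolding split_at_def using assms(1) xs ys by (simp add: list_all2_appendI)
  have "k < length Ls"
    using assms(1,3) by (simp add: list_all2_lengthD)
  then show "concat (take k Ls @ [xs, ys] @ drop (Suc k) Ls) = concat Ls"
    using concat_take_nth_drop[of k Ls] assms(4) by simp
qed

lemma refinement_blocks_nonempty:
  "list_all2 ordered_partition Ms Ls \<Longrightarrow> {} \<notin> set Ms \<Longrightarrow> [] \<notin> set Ls"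
  by (induction rule: list_all2_induct) (auto simp: ordered_partition_def)

lemma concat_refinement_by_singletons:
  assumes "list_all2 ordered_partition Ms Ls" and "{} \<notin> set Ms" and "\<forall>L\<in>set Ls. length L \<le> 1"
  shows "concat Ls = Ms"
  using assms
proof (induction rule: list_all2_induct)
  case (Cons X Ms L Ls)
  then have "L \<noteq> []" and "length L \<le> 1"
    by (auto simp: ordered_partition_def)
  then obtain Y where "L = [Y]"
    by (auto simp: le_Suc_eq length_Suc_conv)
  with Cons show ?case
    by (simp add: ordered_partition_singleton_iff)
qed simp

lemma length_less_length_concat:
  assumes "[] \<notin> set Ls" and "k < length Ls" and "2 \<le> length (Ls ! k)"
  shows "length Ls < length (concat Ls)"
proof -
  have "length Ls = (\<Sum>i<length Ls. 1::nat)"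
    by simp
  also have "\<dots> < (\<Sum>i<length Ls. length (Ls ! i))"
    using assms by (intro sum_strict_mono_ex1) (auto simp: Suc_le_eq intro!: bexI[of _ k] dest: nth_mem)
  also have "\<dots> = length (concat Ls)"
    by (simp add: length_concat sum_list_sum_nth atLeast0LessThan)
  finally show ?thesis .
qed

lemma upper_contour_set_ord_rel_concat:
  assumes refined: "list_all2 ordered_partition Ms Ls" and op: "ordered_partition M Ms"
    and k: "k < length Ms" and i: "i < length (Ls ! k)" and a: "a \<in> Ls ! k ! i"
  shows "{j \<in> M. (j, a) \<in> ord_rel (concat Ls)} = \<Union>(set (take k Ms)) \<union> \<Union>(set (take (Suc i) (Ls ! k)))"
proof -
  define p where "p = length (concat (take k Ls)) + i"
  have "k < length Ls"
    using refined k by (simp add: list_all2_lengthD)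
  then have decomp: "concat Ls = concat (take k Ls) @ Ls ! k @ concat (drop (Suc k) Ls)"
    by (rule concat_take_nth_drop)
  have "p < length (concat Ls)" "a \<in> concat Ls ! p"
    using i a unfolding p_def by (subst decomp; simp add: nth_append)+
  then have "{j \<in> M. (j, a) \<in> ord_rel (concat Ls)} = \<Union>(set (take (Suc p) (concat Ls)))"
    by (rule upper_contour_set_ord_rel[OF ordered_partition_concat[OF refined op]])
  also have "take (Suc p) (concat Ls) = concat (take k Ls) @ take (Suc i) (Ls ! k)"
    using i unfolding p_def by (subst decomp) simp
  also have "\<Union>(set (concat (take k Ls) @ take (Suc i) (Ls ! k))) =
      \<Union>(set (take k Ms)) \<union> \<Union>(set (take (Suc i) (Ls ! k)))"
    using Union_set_concat_refinement[OF list_all2_takeI[OF refined]] by simp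
  finally show ?thesis .
qed

context
  fixes M :: "'a set" and \<phi> :: "'a rel \<Rightarrow> 'a \<Rightarrow> real"
  assumes finite: "finite M"
    and lottery: "\<forall>R. weak_order M R \<longrightarrow> lottery M (\<phi> R)"
    and upper_invariant: "separation_upper_invariant M \<phi>"
    and lower_invariant: "separation_lower_invariant M \<phi>"
begin

lemma separation_preserves_class_probabilities:
  assumes sep: "separation_data M Ms \<kappa> A B" and X: "X \<in> set Ms"
  shows "phi_set \<phi> (ord_rel (split_at Ms \<kappa> A B)) X = phi_set \<phi> (ord_rel Ms) X"
proof -
  define R R' where "R = ord_rel Ms" and "R' = ord_rel (split_at Ms \<kappa> A B)"
  have op: "ordered_partition M Ms" and \<kappa>: "\<kappa> < length Ms"
    using sep unfolding separation_data_def by simp_all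
  have others: "phi_set \<phi> R' Y = phi_set \<phi> R Y" if Y: "Y \<in> set Ms" "Y \<noteq> Ms ! \<kappa>" for Y
  proof -
    obtain j where j: "j < length Ms" "Y = Ms ! j"
      using Y(1) by (auto simp: in_set_conv_nth)
    with Y(2) have "j < \<kappa> \<or> \<kappa> < j"
      by (auto simp: neq_iff)
    then show ?thesis
      using upper_invariant lower_invariant sep j
      unfolding separation_upper_invariant_def separation_lower_invariant_def R_def R'_def by metis
  qed
  have "(\<Sum>Y\<in>set Ms. phi_set \<phi> R' Y) = (\<Sum>Y\<in>set Ms. phi_set \<phi> R Y)"
    using sum_phi_set_classes[OF finite _ op] lottery weak_order_ord_rel
      op ordered_partition_split_at[OF sep] unfolding R_def R'_def by metis
  moreover have "(\<Sum>Y\<in>set Ms - {Ms ! \<kappa>}. phi_set \<phi> R' Y) = (\<Sum>Y\<in>set Ms - {Ms ! \<kappa>}. phi_set \<phi> R Y)"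
    using others by (intro sum.cong) auto
  ultimately have "phi_set \<phi> R' (Ms ! \<kappa>) = phi_set \<phi> R (Ms ! \<kappa>)"
    using sum.remove[OF finite_set nth_mem[OF \<kappa>], of "phi_set \<phi> R'"]
      sum.remove[OF finite_set nth_mem[OF \<kappa>], of "phi_set \<phi> R"] by simp
  with others X show ?thesis
    unfolding R_def R'_def by metis
qed

lemma class_probabilities_through_separation:
  assumes sep: "separation_data M Ms \<kappa> A B"
    and agree: "\<And>Y. Y \<in> set (split_at Ms \<kappa> A B) \<Longrightarrow>
      phi_set \<phi> R Y = phi_set \<phi> (ord_rel (split_at Ms \<kappa> A B)) Y"
    and X: "X \<in> set Ms"
  shows "phi_set \<phi> R X = phi_set \<phi> (ord_rel Ms) X"
proof (cases "X = Ms ! \<kappa>")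
  case True
  have AB: "X = A \<union> B" "A \<inter> B = {}"
    using sep True unfolding separation_data_def by simp_all
  moreover have "finite X"
    using sep X finite ordered_partition_subset finite_subset unfolding separation_data_def by metis
  ultimately have "finite A" "finite B"
    by simp_all
  moreover have "A \<in> set (split_at Ms \<kappa> A B)" "B \<in> set (split_at Ms \<kappa> A B)"
    unfolding split_at_def by simp_all
  ultimately have "phi_set \<phi> R X = phi_set \<phi> (ord_rel (split_at Ms \<kappa> A B)) X"
    using agree AB unfolding phi_set_def by (simp add: sum.union_disjoint)
  then show ?thesis
    using separation_preserves_class_probabilities[OF sep X] by simp
next
  case False
  then have "X \<in> set (split_at Ms \<kappa> A B)"
    using in_set_split_at sep X unfolding separation_data_def by blast
  then show ?thesis
    using agree separation_preserves_class_probabilities[OF sep X] by simp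
qed

lemma refinement_preserves_class_probabilities:
  assumes "list_all2 ordered_partition Ms Ls" and "ordered_partition M Ms" and "X \<in> set Ms"
  shows "phi_set \<phi> (ord_rel (concat Ls)) X = phi_set \<phi> (ord_rel Ms) X"
  using assms
\<comment> \<open>the measure counts the block boundaries of \<open>concat Ls\<close> that \<open>Ms\<close> lacks\<close>
proof (induction "length (concat Ls) - length Ms" arbitrary: Ms Ls X rule: less_induct)
  case less
  have lengths: "length Ls = length Ms"
    using less.prems(1) by (simp add: list_all2_lengthD)
  have nonempty: "{} \<notin> set Ms" "[] \<notin> set Ls"
    using less.prems(2) refinement_blocks_nonempty[OF less.prems(1)] unfolding ordered_partition_iff
    by simp_all
  show ?case
  proof (cases "\<forall>L\<in>set Ls. length L \<le> 1")
    case True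
    then show ?thesis
      using concat_refinement_by_singletons[OF less.prems(1) nonempty(1)] by simp
  next
    case False
    then obtain k where k: "k < length Ms" "2 \<le> length (Ls ! k)"
      using lengths by (auto simp: in_set_conv_nth)
    define xs ys where "xs = take 1 (Ls ! k)" and "ys = drop 1 (Ls ! k)"
    have Ls_k: "Ls ! k = xs @ ys" "xs \<noteq> []" "ys \<noteq> []"
      using k unfolding xs_def ys_def by auto
    define A B where "A = \<Union>(set xs)" and "B = \<Union>(set ys)"
    define Ms' Ls' where "Ms' = split_at Ms k A B" and "Ls' = take k Ls @ [xs, ys] @ drop (Suc k) Ls"
    have sep: "separation_data M Ms k A B"
      and refined: "list_all2 ordered_partition Ms' Ls'" and concat_eq: "concat Ls' = concat Ls"
      using refinement_split_block[OF less.prems(1,2) k(1) Ls_k] unfolding A_def B_def Ms'_def Ls'_def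
      by simp_all
    have "length Ms < length (concat Ls)"
      using length_less_length_concat[OF nonempty(2)] k lengths by simp
    then have "length (concat Ls') - length Ms' < length (concat Ls) - length Ms"
      using concat_eq k unfolding Ms'_def split_at_def by simp
    note IH = less.hyps[OF this refined ordered_partition_split_at[OF sep, folded Ms'_def]]
    show ?thesis
      using class_probabilities_through_separation[OF sep _ less.prems(3)] IH concat_eq
      unfolding Ms'_def by simp
  qed
qed

lemma refinement_preserves_prefix_class_probabilities:
  assumes refined: "list_all2 ordered_partition Ms Ls" and op: "ordered_partition M Ms"
  shows "phi_set \<phi> (ord_rel (concat Ls)) (\<Union>(set (take q Ms))) = phi_set \<phi> (ord_rel Ms) (\<Union>(set (take q Ms)))"
proof -
  have "\<Union>(set (take q Ms)) \<subseteq> M"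
    using op unfolding ordered_partition_def by (metis Union_mono set_take_subset)
  then have phi_set_prefix: "phi_set \<phi> R (\<Union>(set (take q Ms))) = (\<Sum>X\<in>set (take q Ms). phi_set \<phi> R X)" for R
    unfolding phi_set_def by (rule sum_ordered_partition[OF finite_subset[OF _ finite] ordered_partition_take[OF op]])
  have "phi_set \<phi> (ord_rel (concat Ls)) X = phi_set \<phi> (ord_rel Ms) X" if "X \<in> set (take q Ms)" for X
    by (rule refinement_preserves_class_probabilities[OF refined op in_set_takeD[OF that]])
  then show ?thesis
    unfolding phi_set_prefix by (rule sum.cong[OF refl])
qed

lemma fosd_at_ord_rel:
  assumes "list_all2 ordered_partition Ms Ls" and op: "ordered_partition M Ms"
  shows "fosd M (ord_rel Ms) (\<phi> (ord_rel Ms)) (\<phi> (ord_rel (concat Ls)))"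
  unfolding fosd_def
proof
  fix a assume "a \<in> M"
  then obtain p where "p < length Ms" "a \<in> Ms ! p"
    by (rule ordered_partition_obtain_nth[OF op])
  then have "{j \<in> M. (j, a) \<in> ord_rel Ms} = \<Union>(set (take (Suc p) Ms))"
    by (rule upper_contour_set_ord_rel[OF op])
  then show "(\<Sum>j\<in>{j \<in> M. (j, a) \<in> ord_rel Ms}. \<phi> (ord_rel (concat Ls)) j)
      \<le> (\<Sum>j\<in>{j \<in> M. (j, a) \<in> ord_rel Ms}. \<phi> (ord_rel Ms) j)"
    using refinement_preserves_prefix_class_probabilities[OF assms] unfolding phi_set_def by simp
qed

context
  assumes responsive: "separation_responsive M \<phi>"
begin

lemma refinement_increases_block_prefix_probability:
  assumes refined: "list_all2 ordered_partition Ms Ls" and op: "ordered_partition M Ms"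
    and k: "k < length Ms"
  shows "phi_set \<phi> (ord_rel Ms) (\<Union>(set (take q (Ls ! k))))
    \<le> phi_set \<phi> (ord_rel (concat Ls)) (\<Union>(set (take q (Ls ! k))))"
proof -
  define xs ys where "xs = take q (Ls ! k)" and "ys = drop q (Ls ! k)"
  have Ls_k: "Ls ! k = xs @ ys" and class_k: "ordered_partition (Ms ! k) (Ls ! k)"
    using refined k unfolding xs_def ys_def by (auto simp: list_all2_conv_all_nth)
  consider "xs = []" | "ys = []" | "xs \<noteq> []" "ys \<noteq> []"
    by blast
  then show ?thesis
  proof cases
    case 1
    then show ?thesis
      unfolding xs_def[symmetric] phi_set_def by simp
  next
    case 2
    then have "\<Union>(set xs) = Ms ! k"
      using class_k Ls_k unfolding ordered_partition_def by simp
    then show ?thesis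
      using refinement_preserves_class_probabilities[OF refined op nth_mem[OF k]]
      unfolding xs_def by simp
  next
    case 3
    define A B where "A = \<Union>(set xs)" and "B = \<Union>(set ys)"
    define Ms' Ls' where "Ms' = split_at Ms k A B" and "Ls' = take k Ls @ [xs, ys] @ drop (Suc k) Ls"
    have sep: "separation_data M Ms k A B"
      and refined': "list_all2 ordered_partition Ms' Ls'" and "concat Ls' = concat Ls"
      using refinement_split_block[OF refined op k Ls_k 3] unfolding A_def B_def Ms'_def Ls'_def
      by simp_all
    moreover have "A \<in> set Ms'"
      unfolding Ms'_def split_at_def by simp
    ultimately have "phi_set \<phi> (ord_rel (concat Ls)) A = phi_set \<phi> (ord_rel Ms') A"
      using refinement_preserves_class_probabilities[OF refined' ordered_partition_split_at[OF sep, folded Ms'_def]]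
      by simp
    moreover have "phi_set \<phi> (ord_rel Ms) A \<le> phi_set \<phi> (ord_rel Ms') A"
      using responsive sep unfolding separation_responsive_def Let_def Ms'_def by blast
    ultimately show ?thesis
      unfolding A_def xs_def by simp
  qed
qed

lemma fosd_at_ord_rel_concat:
  assumes refined: "list_all2 ordered_partition Ms Ls" and op: "ordered_partition M Ms"
  shows "fosd M (ord_rel (concat Ls)) (\<phi> (ord_rel (concat Ls))) (\<phi> (ord_rel Ms))"
  unfolding fosd_def
proof
  fix a assume "a \<in> M"
  then obtain k where k: "k < length Ms" "a \<in> Ms ! k"
    by (rule ordered_partition_obtain_nth[OF op])
  have class_k: "ordered_partition (Ms ! k) (Ls ! k)"
    using refined k by (auto simp: list_all2_conv_all_nth)
  obtain i where i: "i < length (Ls ! k)" "a \<in> Ls ! k ! i"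
    by (rule ordered_partition_obtain_nth[OF class_k k(2)])
  define V U where "V = \<Union>(set (take k Ms))" and "U = \<Union>(set (take (Suc i) (Ls ! k)))"
  have upper: "{j \<in> M. (j, a) \<in> ord_rel (concat Ls)} = V \<union> U"
    unfolding V_def U_def by (rule upper_contour_set_ord_rel_concat[OF refined op k(1) i])
  have "U \<subseteq> Ms ! k"
    using class_k unfolding U_def ordered_partition_def by (metis Union_mono set_take_subset)
  then have "V \<inter> U = {}"
    using ordered_partition_take_disjoint_nth[OF op k(1)] unfolding V_def by blast
  moreover have "finite (V \<union> U)"
    unfolding upper[symmetric] using finite by simp
  moreover have "phi_set \<phi> (ord_rel (concat Ls)) V = phi_set \<phi> (ord_rel Ms) V"
    unfolding V_def by (rule refinement_preserves_prefix_class_probabilities[OF refined op])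
  moreover have "phi_set \<phi> (ord_rel Ms) U \<le> phi_set \<phi> (ord_rel (concat Ls)) U"
    unfolding U_def by (rule refinement_increases_block_prefix_probability[OF refined op k(1)])
  ultimately show "(\<Sum>j\<in>{j \<in> M. (j, a) \<in> ord_rel (concat Ls)}. \<phi> (ord_rel Ms) j)
      \<le> (\<Sum>j\<in>{j \<in> M. (j, a) \<in> ord_rel (concat Ls)}. \<phi> (ord_rel (concat Ls)) j)"
    unfolding upper phi_set_def by (simp add: sum.union_disjoint)
qed

end

end

theorem lemma6:
  fixes M :: "'a set" and \<phi> :: "'a rel \<Rightarrow> 'a \<Rightarrow> real"
  assumes "finite M"
    and "\<forall>R. weak_order M R \<longrightarrow> lottery M (\<phi> R)"
    and "separation_monotonic M \<phi>"
    and "separation_upper_invariant M \<phi>"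
    and "separation_lower_invariant M \<phi>"
  shows "multi_separation_strategyproof M \<phi>"
  unfolding multi_separation_strategyproof_def
proof (intro allI impI)
  fix R R' assume "multi_separation M R R'"
  then obtain Ms Ls where "ordered_partition M Ms" "list_all2 ordered_partition Ms Ls"
    and "R = ord_rel Ms" "R' = ord_rel (concat Ls)"
    unfolding multi_separation_def by (metis list_all2_conv_all_nth)
  moreover have "separation_responsive M \<phi>"
    using assms(3) unfolding separation_monotonic_def by simp
  ultimately show "fosd M R (\<phi> R) (\<phi> R') \<and> fosd M R' (\<phi> R') (\<phi> R)"
    using fosd_at_ord_rel fosd_at_ord_rel_concat assms(1,2,4,5) by blast
qed

end
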